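(* Let $n\ge 1$ and let $D_0,D_1,\dots,D_{2n}$ be positive integers. For $i=1,\dots,n$ let $A_i=\{A_i^{s}\}_{s=1}^{d_i}\subset M_{D_{2i-2}\times D_{2i-1}}(\mathbb{C})$ be injective MPS tensors, and let $B_i=\{B_i^{t}\}_{t=1}^{e_i}$ and $B_i'=\{B_i'^{t}\}_{t=1}^{e_i}$ be families in $M_{D_{2i-1}\times D_{2i}}(\mathbb{C})$, with $B_i$ not identically zero for every $i$. Suppose that for all indices $s_1,t_1,\dots,s_n,t_n$, $$A_1^{s_1}B_1^{t_1}A_2^{s_2}B_2^{t_2}\cdots A_n^{s_n}B_n^{t_n}=A_1^{s_1}B_1'^{t_1}A_2^{s_2}B_2'^{t_2}\cdots A_n^{s_n}B_n'^{t_n}$$ (equality of $D_0\times D_{2n}$ matrices). Then there exist nonzero scalars $\beta_1,\dots,\beta_n\in\mathbb{C}$ with $\prod_{i=1}^n\beta_i=1$ such that $B_i^{t}=\beta_i B_i'^{t}$ for all $i$ and all $t$.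
   Context: A family $A=\{A^s\}_{s=1}^{d}\subset M_{D\times D'}(\mathbb{C})$ is called an injective MPS tensor if the linear map $M_{D'\times D}(\mathbb{C})\to\mathbb{C}^d$, $X\mapsto(\mathrm{tr}(XA^s))_{s=1}^d$, is injective; equivalently, the matrices $A^1,\dots,A^d$ span $M_{D\times D'}(\mathbb{C})$. *)

theory Defs
  imports "Jordan_Normal_Form.Matrix"
begin

definition mat_trace :: "complex mat \<Rightarrow> complex" where
  "mat_trace X = (\<Sum>k<dim_row X. X $$ (k, k))"

text \<open>Injective MPS tensor: a family A^0,...,A^(d-1) of D x D' complex matrices such that
  the linear map X |-> (tr (X A^s))_s from D' x D matrices to C^d is injective.
  (Physical indices are 0-based: s < d.)\<close>
definition injective_mps :: "nat \<Rightarrow> nat \<Rightarrow> nat \<Rightarrow> (nat \<Rightarrow> complex mat) \<Rightarrow> bool" where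
  "injective_mps D D' d A \<longleftrightarrow>
     (\<forall>s<d. A s \<in> carrier_mat D D') \<and>
     inj_on (\<lambda>X. vec d (\<lambda>s. mat_trace (X * A s))) (carrier_mat D' D)"

definition chain_prod :: "nat \<Rightarrow> nat \<Rightarrow> (nat \<Rightarrow> complex mat) \<Rightarrow> complex mat" where
  "chain_prod D0 n M = foldl (\<lambda>P i. P * M i) (1\<^sub>m D0) [1..<Suc n]"

end

theory Submission
  imports Defs
begin

(* Injectivity of A_i lets one replace, slot by slot, A_i^(s_i) by an arbitrary matrix Y_i: every
   entry of the chain is tr(X A_i^s) for a matrix X depending only on the remaining factors, so
   equality for all s forces equality of the X's and hence for all Y_i. Choosing each Y_i to be a
   matrix unit turns an entry of the chain into the product of single entries of the B_i(t_i).
   Equality of these products for all choices of entries and of t forces B_i = beta_i B'_i with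
   prod beta_i = 1. *)

lemma mult_mat_entry_eq_trace:
  fixes L Y C :: "complex mat"
  assumes L: "L \<in> carrier_mat p q" and Y: "Y \<in> carrier_mat q r" and C: "C \<in> carrier_mat r s"
    and a: "a < p" and b: "b < s"
  shows "(L * Y * C) $$ (a,b) = mat_trace (mat r q (\<lambda>(j,i). C $$ (j,b) * L $$ (a,i)) * Y)"
proof -
  have "(L * Y * C) $$ (a,b) = (\<Sum>j<r. (\<Sum>i<q. L $$ (a,i) * Y $$ (i,j)) * C $$ (j,b))"
    using L Y C a b
    by (simp add: scalar_prod_def atLeast0LessThan sum_distrib_left sum_distrib_right mult_ac
        sum.swap[of _ "{..<r}"])
  also have "\<dots> = (\<Sum>j<r. (\<Sum>i<q. C $$ (j,b) * L $$ (a,i) * Y $$ (i,j)))"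
    by (simp add: sum_distrib_right sum_distrib_left mult_ac)
  also have "\<dots> = mat_trace (mat r q (\<lambda>(j,i). C $$ (j,b) * L $$ (a,i)) * Y)"
    using Y by (simp add: mat_trace_def scalar_prod_def atLeast0LessThan)
  finally show ?thesis .
qed

lemma injective_mps_cancel:
  assumes inj: "injective_mps p q d A"
    and L: "L \<in> carrier_mat m p" "L' \<in> carrier_mat m p"
    and C: "C \<in> carrier_mat q k" "C' \<in> carrier_mat q k"
    and eq: "\<And>s. s < d \<Longrightarrow> L * A s * C = L' * A s * C'"
    and Z: "Z \<in> carrier_mat p q"
  shows "L * Z * C = L' * Z * C'"
proof (rule eq_matI)
  fix a b assume "a < dim_row (L' * Z * C')" "b < dim_col (L' * Z * C')"
  then have a: "a < m" and b: "b < k" using L C by auto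
  define X where "X M N = mat q p (\<lambda>(j,i). N $$ (j,b) * M $$ (a,i))" for M N :: "complex mat"
  have trace: "(M * W * N) $$ (a,b) = mat_trace (X M N * W)"
    if "M \<in> carrier_mat m p" "W \<in> carrier_mat p q" "N \<in> carrier_mat q k" for M N W
    unfolding X_def using mult_mat_entry_eq_trace that a b by blast
  have A: "A s \<in> carrier_mat p q" if "s < d" for s
    using inj that unfolding injective_mps_def by auto
  have "vec d (\<lambda>s. mat_trace (X L C * A s)) = vec d (\<lambda>s. mat_trace (X L' C' * A s))"
    using eq trace[OF L(1) A C(1)] trace[OF L(2) A C(2)] by (intro eq_vecI) auto
  moreover have "X L C \<in> carrier_mat q p" "X L' C' \<in> carrier_mat q p"
    by (simp_all add: X_def)
  ultimately have "X L C = X L' C'"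
    using inj unfolding injective_mps_def by (auto dest: inj_onD)
  then show "(L * Z * C) $$ (a,b) = (L' * Z * C') $$ (a,b)"
    using trace[OF L(1) Z C(1)] trace[OF L(2) Z C(2)] by simp
qed (use L C in auto)

fun chain_from :: "(nat \<Rightarrow> 'a :: semiring_1 mat) \<Rightarrow> 'a mat \<Rightarrow> nat \<Rightarrow> nat \<Rightarrow> 'a mat" where
  "chain_from M X a 0 = X"
| "chain_from M X a (Suc k) = chain_from M X a k * M (a + Suc k)"

lemma foldl_mult_eq_chain_from:
  "foldl (\<lambda>P i. P * M i) X [Suc a..<Suc (a+k)] = chain_from M X a k"
  by (induction k) auto

lemma chain_prod_eq_chain_from: "chain_prod D0 n M = chain_from M (1\<^sub>m D0) 0 n"
  unfolding chain_prod_def using foldl_mult_eq_chain_from[of M "1\<^sub>m D0" 0 n] by simp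

lemma chain_from_add: "chain_from M X a (k + l) = chain_from M (chain_from M X a k) (a + k) l"
  by (induction l) (auto simp: add.assoc)

lemma chain_from_cong:
  "(\<And>j. a < j \<Longrightarrow> j \<le> a + k \<Longrightarrow> M j = M' j) \<Longrightarrow> chain_from M X a k = chain_from M' X a k"
  by (induction k) auto

lemma chain_from_carrier:
  assumes "X \<in> carrier_mat m (R a)"
    and "\<And>j. a < j \<Longrightarrow> j \<le> a + k \<Longrightarrow> M j \<in> carrier_mat (R (j-1)) (R j)"
  shows "chain_from M X a k \<in> carrier_mat m (R (a+k))"
  using assms
proof (induction k)
  case (Suc k)
  have "chain_from M X a k \<in> carrier_mat m (R (a+k))"
    using Suc by auto
  moreover have "M (a + Suc k) \<in> carrier_mat (R (a+k)) (R (a + Suc k))"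
    using Suc.prems(2)[of "a + Suc k"] by simp
  ultimately show ?case by auto
qed simp

lemma chain_from_mult_start:
  assumes "X \<in> carrier_mat m p" "Z \<in> carrier_mat p (R a)"
    and "\<And>j. a < j \<Longrightarrow> j \<le> a + k \<Longrightarrow> M j \<in> carrier_mat (R (j-1)) (R j)"
  shows "chain_from M (X * Z) a k = X * chain_from M Z a k"
  using assms
proof (induction k)
  case (Suc k)
  have "chain_from M Z a k \<in> carrier_mat p (R (a+k))"
    using chain_from_carrier[of Z p R a k M] Suc.prems by auto
  moreover have "M (a + Suc k) \<in> carrier_mat (R (a+k)) (R (a + Suc k))"
    using Suc.prems(3)[of "a + Suc k"] by simp
  ultimately show ?case using Suc by simp
qed simp

lemma chain_from_split:
  assumes i: "1 \<le> i" "i \<le> n"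
    and M: "\<And>j. 1 \<le> j \<Longrightarrow> j \<le> n \<Longrightarrow> M j \<in> carrier_mat (R (j-1)) (R j)"
  shows "chain_from M (1\<^sub>m (R 0)) 0 n
    = chain_from M (1\<^sub>m (R 0)) 0 (i-1) * M i * chain_from M (1\<^sub>m (R i)) i (n-i)"
proof -
  define L where "L = chain_from M (1\<^sub>m (R 0)) 0 (i-1)"
  have L: "L \<in> carrier_mat (R 0) (R (i-1))"
    unfolding L_def using chain_from_carrier[of "1\<^sub>m (R 0)" "R 0" R 0 "i-1" M] M i by auto
  have LM: "L * M i \<in> carrier_mat (R 0) (R i)" using L M i by auto
  have n: "n = (i - 1) + 1 + (n - i)" using i by simp
  have "chain_from M (1\<^sub>m (R 0)) 0 n = chain_from M (chain_from M L (i-1) 1) i (n-i)"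
    unfolding L_def using i by (subst n) (simp only: chain_from_add, simp)
  also have "chain_from M L (i-1) 1 = (L * M i) * 1\<^sub>m (R i)"
    using i right_mult_one_mat[OF LM] by simp
  also have "chain_from M \<dots> i (n-i) = L * M i * chain_from M (1\<^sub>m (R i)) i (n-i)"
    by (rule chain_from_mult_start[where R=R]) (use LM M i in auto)
  finally show ?thesis unfolding L_def .
qed

lemma chain_prod_slot_factor:
  fixes Y H :: "nat \<Rightarrow> complex mat"
  assumes i: "1 \<le> i" "i \<le> n"
    and Y: "\<And>j. 1 \<le> j \<Longrightarrow> j \<le> n \<Longrightarrow> Y j \<in> carrier_mat (R (j-1)) (S j)"
    and H: "\<And>j. 1 \<le> j \<Longrightarrow> j \<le> n \<Longrightarrow> H j \<in> carrier_mat (S j) (R j)"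
  obtains L C where "L \<in> carrier_mat (R 0) (R (i-1))" "C \<in> carrier_mat (S i) (R n)"
    and "\<And>Z. Z \<in> carrier_mat (R (i-1)) (S i) \<Longrightarrow>
           chain_prod (R 0) n (\<lambda>j. (Y(i := Z)) j * H j) = L * Z * C"
proof
  define M where "M = (\<lambda>j. Y j * H j)"
  have M: "M j \<in> carrier_mat (R (j-1)) (R j)" if "1 \<le> j" "j \<le> n" for j
    unfolding M_def using Y H that by (meson mult_carrier_mat)
  show L: "chain_from M (1\<^sub>m (R 0)) 0 (i-1) \<in> carrier_mat (R 0) (R (i-1))"
    using chain_from_carrier[of "1\<^sub>m (R 0)" "R 0" R 0 "i-1" M] M i by auto
  have "chain_from M (1\<^sub>m (R i)) i (n-i) \<in> carrier_mat (R i) (R (i + (n-i)))"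
    using chain_from_carrier[of "1\<^sub>m (R i)" "R i" R i "n-i" M] M i by auto
  then have Q: "chain_from M (1\<^sub>m (R i)) i (n-i) \<in> carrier_mat (R i) (R n)"
    using i by simp
  show C: "H i * chain_from M (1\<^sub>m (R i)) i (n-i) \<in> carrier_mat (S i) (R n)"
    by (rule mult_carrier_mat[OF H[OF i] Q])
  fix Z :: "complex mat" assume Z: "Z \<in> carrier_mat (R (i-1)) (S i)"
  define MZ where "MZ = (\<lambda>j. (Y(i := Z)) j * H j)"
  have MZ: "MZ j \<in> carrier_mat (R (j-1)) (R j)" if "1 \<le> j" "j \<le> n" for j
    unfolding MZ_def using Y H Z that by (auto intro!: mult_carrier_mat)
  have "chain_from MZ (1\<^sub>m (R 0)) 0 n
      = chain_from MZ (1\<^sub>m (R 0)) 0 (i-1) * MZ i * chain_from MZ (1\<^sub>m (R i)) i (n-i)"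
    by (rule chain_from_split[where R=R, OF i MZ])
  also have "chain_from MZ (1\<^sub>m (R 0)) 0 (i-1) = chain_from M (1\<^sub>m (R 0)) 0 (i-1)"
    unfolding M_def MZ_def by (rule chain_from_cong) auto
  also have "chain_from MZ (1\<^sub>m (R i)) i (n-i) = chain_from M (1\<^sub>m (R i)) i (n-i)"
    unfolding M_def MZ_def by (rule chain_from_cong) auto
  also have "chain_from M (1\<^sub>m (R 0)) 0 (i-1) * MZ i * chain_from M (1\<^sub>m (R i)) i (n-i)
      = chain_from M (1\<^sub>m (R 0)) 0 (i-1) * Z * (H i * chain_from M (1\<^sub>m (R i)) i (n-i))"
  proof -
    have "chain_from M (1\<^sub>m (R 0)) 0 (i-1) * (Z * H i) = chain_from M (1\<^sub>m (R 0)) 0 (i-1) * Z * H i"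
      using assoc_mult_mat[OF L Z H[OF i]] by simp
    moreover have "chain_from M (1\<^sub>m (R 0)) 0 (i-1) * Z * H i * chain_from M (1\<^sub>m (R i)) i (n-i)
        = chain_from M (1\<^sub>m (R 0)) 0 (i-1) * Z * (H i * chain_from M (1\<^sub>m (R i)) i (n-i))"
      using assoc_mult_mat[OF mult_carrier_mat[OF L Z] H[OF i] Q] .
    ultimately show ?thesis
      unfolding MZ_def by simp
  qed
  finally show "chain_prod (R 0) n MZ
      = chain_from M (1\<^sub>m (R 0)) 0 (i-1) * Z * (H i * chain_from M (1\<^sub>m (R i)) i (n-i))"
    unfolding chain_prod_eq_chain_from .
qed

lemma chain_prod_eq_replace_slot:
  fixes Y F G :: "nat \<Rightarrow> complex mat"
  assumes i: "1 \<le> i" "i \<le> n"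
    and Y: "\<And>j. 1 \<le> j \<Longrightarrow> j \<le> n \<Longrightarrow> Y j \<in> carrier_mat (R (j-1)) (S j)"
    and F: "\<And>j. 1 \<le> j \<Longrightarrow> j \<le> n \<Longrightarrow> F j \<in> carrier_mat (S j) (R j)"
    and G: "\<And>j. 1 \<le> j \<Longrightarrow> j \<le> n \<Longrightarrow> G j \<in> carrier_mat (S j) (R j)"
    and inj: "injective_mps (R (i-1)) (S i) d A"
    and eq: "\<And>s. s < d \<Longrightarrow> chain_prod (R 0) n (\<lambda>j. (Y(i := A s)) j * F j)
                             = chain_prod (R 0) n (\<lambda>j. (Y(i := A s)) j * G j)"
  shows "chain_prod (R 0) n (\<lambda>j. Y j * F j) = chain_prod (R 0) n (\<lambda>j. Y j * G j)"
proof -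
  obtain LF CF where LF: "LF \<in> carrier_mat (R 0) (R (i-1))" "CF \<in> carrier_mat (S i) (R n)"
    and F_slot: "\<And>Z. Z \<in> carrier_mat (R (i-1)) (S i) \<Longrightarrow>
           chain_prod (R 0) n (\<lambda>j. (Y(i := Z)) j * F j) = LF * Z * CF"
    using chain_prod_slot_factor[where R=R and S=S, OF i Y F] by blast
  obtain LG CG where LG: "LG \<in> carrier_mat (R 0) (R (i-1))" "CG \<in> carrier_mat (S i) (R n)"
    and G_slot: "\<And>Z. Z \<in> carrier_mat (R (i-1)) (S i) \<Longrightarrow>
           chain_prod (R 0) n (\<lambda>j. (Y(i := Z)) j * G j) = LG * Z * CG"
    using chain_prod_slot_factor[where R=R and S=S, OF i Y G] by blast
  have A: "A s \<in> carrier_mat (R (i-1)) (S i)" if "s < d" for s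
    using inj that unfolding injective_mps_def by auto
  have Yi: "Y i \<in> carrier_mat (R (i-1)) (S i)"
    using Y i by auto
  have "LF * Y i * CF = LG * Y i * CG"
    by (rule injective_mps_cancel[OF inj LF(1) LG(1) LF(2) LG(2) _ Yi])
      (use eq F_slot[OF A] G_slot[OF A] in simp)
  then show ?thesis
    using F_slot[OF Yi] G_slot[OF Yi] by simp
qed

lemma chain_prod_eq_all_slots:
  fixes A :: "nat \<Rightarrow> nat \<Rightarrow> complex mat" and Y F G :: "nat \<Rightarrow> complex mat"
  assumes inj: "\<And>i. 1 \<le> i \<Longrightarrow> i \<le> n \<Longrightarrow> injective_mps (R (i-1)) (S i) (d i) (A i)"
    and F: "\<And>j. 1 \<le> j \<Longrightarrow> j \<le> n \<Longrightarrow> F j \<in> carrier_mat (S j) (R j)"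
    and G: "\<And>j. 1 \<le> j \<Longrightarrow> j \<le> n \<Longrightarrow> G j \<in> carrier_mat (S j) (R j)"
    and eq: "\<And>s. (\<forall>i\<in>{1..n}. s i < d i) \<Longrightarrow>
           chain_prod (R 0) n (\<lambda>i. A i (s i) * F i) = chain_prod (R 0) n (\<lambda>i. A i (s i) * G i)"
    and Y: "\<And>j. 1 \<le> j \<Longrightarrow> j \<le> n \<Longrightarrow> Y j \<in> carrier_mat (R (j-1)) (S j)"
  shows "chain_prod (R 0) n (\<lambda>i. Y i * F i) = chain_prod (R 0) n (\<lambda>i. Y i * G i)"
proof -
  have freed: "chain_prod (R 0) n (\<lambda>i. Y i * F i) = chain_prod (R 0) n (\<lambda>i. Y i * G i)"
    if "k \<le> n" "\<forall>j\<in>{1..n}. Y j \<in> carrier_mat (R (j-1)) (S j) \<and> (k < j \<longrightarrow> (\<exists>s<d j. Y j = A j s))"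
    for k Y
    using that
  proof (induction k arbitrary: Y)
    case 0
    then have "\<forall>j\<in>{1..n}. \<exists>s. s < d j \<and> Y j = A j s"
      by auto
    then obtain s where s: "\<forall>j\<in>{1..n}. s j < d j \<and> Y j = A j (s j)"
      by (metis bchoice)
    then have "chain_prod (R 0) n (\<lambda>i. Y i * H i) = chain_prod (R 0) n (\<lambda>i. A i (s i) * H i)"
      for H :: "nat \<Rightarrow> complex mat"
      unfolding chain_prod_eq_chain_from by (intro chain_from_cong) auto
    then show ?case
      using eq s by simp
  next
    case (Suc k)
    have i: "1 \<le> Suc k" "Suc k \<le> n"
      using Suc.prems by auto
    show ?case
    proof (rule chain_prod_eq_replace_slot[OF i _ F G inj[OF i]])
      show "\<And>j. 1 \<le> j \<Longrightarrow> j \<le> n \<Longrightarrow> Y j \<in> carrier_mat (R (j-1)) (S j)"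
        using Suc.prems by auto
      fix s assume s: "s < d (Suc k)"
      have As: "A (Suc k) s \<in> carrier_mat (R (Suc k - 1)) (S (Suc k))"
        using inj[OF i] s unfolding injective_mps_def by auto
      have "\<forall>j\<in>{1..n}. (Y(Suc k := A (Suc k) s)) j \<in> carrier_mat (R (j-1)) (S j) \<and>
          (k < j \<longrightarrow> (\<exists>s'<d j. (Y(Suc k := A (Suc k) s)) j = A j s'))"
      proof
        fix j assume j: "j \<in> {1..n}"
        show "(Y(Suc k := A (Suc k) s)) j \<in> carrier_mat (R (j-1)) (S j) \<and>
          (k < j \<longrightarrow> (\<exists>s'<d j. (Y(Suc k := A (Suc k) s)) j = A j s'))"
          using Suc.prems(2) j As s by (cases "j = Suc k") auto
      qed
      then show "chain_prod (R 0) n (\<lambda>j. (Y(Suc k := A (Suc k) s)) j * F j)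
               = chain_prod (R 0) n (\<lambda>j. (Y(Suc k := A (Suc k) s)) j * G j)"
        using Suc.prems(1) by (intro Suc.IH) auto
    qed
  qed
  show ?thesis
    using Y by (intro freed[of n]) auto
qed

definition single_row_mat :: "nat \<Rightarrow> nat \<Rightarrow> nat \<Rightarrow> (nat \<Rightarrow> 'a :: zero) \<Rightarrow> 'a mat" where
  "single_row_mat m q x v = mat m q (\<lambda>(i,j). if i = x then v j else 0)"

lemma single_row_mat_carrier [simp]: "single_row_mat m q x v \<in> carrier_mat m q"
  by (simp add: single_row_mat_def)

lemma single_row_mat_mult:
  fixes v :: "nat \<Rightarrow> 'a :: comm_semiring_1"
  assumes "M \<in> carrier_mat p q"
  shows "single_row_mat m p x v * M = single_row_mat m q x (\<lambda>j. \<Sum>k<p. v k * M $$ (k,j))"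
  using assms
  by (intro eq_matI) (auto simp: single_row_mat_def scalar_prod_def atLeast0LessThan)

lemma single_row_mat_mult_single_row_mat:
  fixes v w :: "nat \<Rightarrow> 'a :: comm_semiring_1"
  assumes "y < p"
  shows "single_row_mat m p x v * single_row_mat p q y w = single_row_mat m q x (\<lambda>j. v y * w j)"
proof -
  have "single_row_mat m p x v * single_row_mat p q y w
      = single_row_mat m q x (\<lambda>j. \<Sum>k<p. v k * single_row_mat p q y w $$ (k,j))"
    by (rule single_row_mat_mult) simp
  also have "\<dots> = single_row_mat m q x (\<lambda>j. v y * w j)"
    unfolding single_row_mat_def using assms
    by (intro eq_matI) (auto simp: if_distrib cong: if_cong)
  finally show ?thesis .
qed

lemma chain_from_single_row_mats:
  fixes v :: "nat \<Rightarrow> nat \<Rightarrow> 'a :: comm_semiring_1"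
  assumes M: "\<And>j. 1 \<le> j \<Longrightarrow> j \<le> k \<Longrightarrow> M j = single_row_mat (R (j-1)) (R j) (c (j-1)) (v j)"
    and c: "\<And>j. 1 \<le> j \<Longrightarrow> j < k \<Longrightarrow> c j < R j"
    and k: "1 \<le> k"
  shows "chain_from M (1\<^sub>m (R 0)) 0 k
    = single_row_mat (R 0) (R k) (c 0) (\<lambda>x. (\<Prod>l\<in>{1..<k}. v l (c l)) * v k x)"
  using assms
proof (induction k)
  case (Suc k)
  show ?case
  proof (cases "k = 0")
    case True
    then show ?thesis
      using Suc.prems(1)[of 1] by (simp add: left_mult_one_mat[OF single_row_mat_carrier])
  next
    case False
    then have "chain_from M (1\<^sub>m (R 0)) 0 (Suc k)
      = single_row_mat (R 0) (R k) (c 0) (\<lambda>x. (\<Prod>l\<in>{1..<k}. v l (c l)) * v k x)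
        * single_row_mat (R k) (R (Suc k)) (c k) (v (Suc k))"
      using Suc by simp
    also have "\<dots> = single_row_mat (R 0) (R (Suc k)) (c 0)
        (\<lambda>x. ((\<Prod>l\<in>{1..<k}. v l (c l)) * v k (c k)) * v (Suc k) x)"
      using Suc.prems(2)[of k] False by (simp add: single_row_mat_mult_single_row_mat)
    also have "(\<Prod>l\<in>{1..<k}. v l (c l)) * v k (c k) = (\<Prod>l\<in>{1..<Suc k}. v l (c l))"
      using False by (simp add: prod.atLeastLessThan_Suc)
    finally show ?thesis .
  qed
qed simp

lemma chain_prod_eq_imp_prod_entries_eq:
  fixes F G :: "nat \<Rightarrow> complex mat"
  assumes n: "1 \<le> n" and R0: "0 < R 0"
    and F: "\<And>j. 1 \<le> j \<Longrightarrow> j \<le> n \<Longrightarrow> F j \<in> carrier_mat (S j) (R j)"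
    and G: "\<And>j. 1 \<le> j \<Longrightarrow> j \<le> n \<Longrightarrow> G j \<in> carrier_mat (S j) (R j)"
    and eq: "\<And>Y. (\<And>j. 1 \<le> j \<Longrightarrow> j \<le> n \<Longrightarrow> Y j \<in> carrier_mat (R (j-1)) (S j)) \<Longrightarrow>
           chain_prod (R 0) n (\<lambda>j. Y j * F j) = chain_prod (R 0) n (\<lambda>j. Y j * G j)"
    and r: "\<And>j. 1 \<le> j \<Longrightarrow> j \<le> n \<Longrightarrow> r j < S j"
    and c: "\<And>j. 1 \<le> j \<Longrightarrow> j \<le> n \<Longrightarrow> c j < R j"
  shows "(\<Prod>j=1..n. F j $$ (r j, c j)) = (\<Prod>j=1..n. G j $$ (r j, c j))"
proof -
  define c' where "c' = c(0 := 0)"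
  \<comment> \<open>Y j is the matrix unit at position (c (j-1), r j), with row 0 in the first slot.\<close>
  define Y :: "nat \<Rightarrow> complex mat"
    where "Y j = single_row_mat (R (j-1)) (S j) (c' (j-1)) (\<lambda>x. if x = r j then 1 else 0)"
    for j
  have probe: "chain_prod (R 0) n (\<lambda>j. Y j * H j) $$ (0, c n) = (\<Prod>j=1..n. H j $$ (r j, c j))"
    if H: "\<And>j. 1 \<le> j \<Longrightarrow> j \<le> n \<Longrightarrow> H j \<in> carrier_mat (S j) (R j)" for H
  proof -
    have "Y j * H j = single_row_mat (R (j-1)) (R j) (c' (j-1)) (\<lambda>x. H j $$ (r j, x))"
      if "1 \<le> j" "j \<le> n" for j
      using H[OF that] r[OF that]
      by (simp add: Y_def single_row_mat_mult if_distrib[of "\<lambda>z. z * _"] cong: if_cong)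
    then have "chain_prod (R 0) n (\<lambda>j. Y j * H j) = single_row_mat (R 0) (R n) 0
        (\<lambda>x. (\<Prod>l\<in>{1..<n}. H l $$ (r l, c' l)) * H n $$ (r n, x))"
      unfolding chain_prod_eq_chain_from
      by (subst chain_from_single_row_mats[where R=R and c=c' and v="\<lambda>j x. H j $$ (r j, x)"])
        (use c n in \<open>auto simp: c'_def\<close>)
    moreover have "(\<Prod>l\<in>{1..<n}. H l $$ (r l, c' l)) = (\<Prod>l\<in>{1..<n}. H l $$ (r l, c l))"
      by (rule prod.cong) (auto simp: c'_def)
    ultimately show ?thesis
      using R0 c[OF n order_refl] n
      by (simp add: single_row_mat_def prod.atLeastLessThan_Suc
          atLeastLessThanSuc_atLeastAtMost[symmetric])
  qed
  have "chain_prod (R 0) n (\<lambda>j. Y j * F j) = chain_prod (R 0) n (\<lambda>j. Y j * G j)"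
    by (rule eq) (simp add: Y_def)
  then show ?thesis
    using probe[OF F] probe[OF G] by simp
qed

lemma prod_eq_imp_proportional:
  fixes u w :: "'i \<Rightarrow> 'x \<Rightarrow> 'a :: field"
  assumes I: "finite I"
    and eq: "\<And>f. (\<forall>i\<in>I. f i \<in> X i) \<Longrightarrow> (\<Prod>i\<in>I. u i (f i)) = (\<Prod>i\<in>I. w i (f i))"
    and nz: "\<forall>i\<in>I. \<exists>x\<in>X i. u i x \<noteq> 0"
  shows "\<exists>\<beta>. (\<forall>i\<in>I. \<beta> i \<noteq> 0) \<and> prod \<beta> I = 1 \<and> (\<forall>i\<in>I. \<forall>x\<in>X i. u i x = \<beta> i * w i x)"
proof -
  obtain f0 where f0: "\<forall>i\<in>I. f0 i \<in> X i \<and> u i (f0 i) \<noteq> 0"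
    using nz by (metis bchoice)
  have U: "(\<Prod>i\<in>I. u i (f0 i)) = (\<Prod>i\<in>I. w i (f0 i))"
    using eq f0 by blast
  have U_nz: "(\<Prod>i\<in>I. u i (f0 i)) \<noteq> 0"
    using f0 I by simp
  have w_nz: "\<forall>i\<in>I. w i (f0 i) \<noteq> 0"
    using U U_nz I by simp
  define \<beta> where "\<beta> i = u i (f0 i) / w i (f0 i)" for i
  have "u i x = \<beta> i * w i x" if i: "i \<in> I" and x: "x \<in> X i" for i x
  proof -
    \<comment> \<open>Vary the choice f0 in the single coordinate i.\<close>
    define pu where "pu = (\<Prod>j\<in>I-{i}. u j (f0 j))"
    define pw where "pw = (\<Prod>j\<in>I-{i}. w j (f0 j))"
    have prod_upd: "(\<Prod>j\<in>I. g j ((f0(i:=y)) j)) = g i y * (\<Prod>j\<in>I-{i}. g j (f0 j))"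
      for g :: "'i \<Rightarrow> 'x \<Rightarrow> 'a" and y
    proof -
      have "(\<Prod>j\<in>I-{i}. g j ((f0(i:=y)) j)) = (\<Prod>j\<in>I-{i}. g j (f0 j))"
        by (rule prod.cong) auto
      then show ?thesis
        using prod.remove[OF I i, of "\<lambda>j. g j ((f0(i:=y)) j)"] by simp
    qed
    have e: "u i x * pu = w i x * pw"
      using eq[of "f0(i:=x)"] f0 x prod_upd[of u x] prod_upd[of w x]
      unfolding pu_def pw_def by auto
    have e0: "u i (f0 i) * pu = w i (f0 i) * pw"
      using U prod_upd[of u "f0 i"] prod_upd[of w "f0 i"] unfolding pu_def pw_def by simp
    have pu: "pu \<noteq> 0"
      using U_nz prod_upd[of u "f0 i"] unfolding pu_def by auto
    have "pw / pu = \<beta> i"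
      using e0 pu w_nz i unfolding \<beta>_def by (simp add: field_simps)
    moreover have "u i x = w i x * (pw / pu)"
      using e pu by (simp add: field_simps)
    ultimately show ?thesis
      by (simp add: mult.commute)
  qed
  moreover have "\<forall>i\<in>I. \<beta> i \<noteq> 0"
    using f0 w_nz by (simp add: \<beta>_def)
  moreover have "prod \<beta> I = 1"
    using U U_nz unfolding \<beta>_def by (simp add: prod_dividef)
  ultimately show ?thesis
    by blast
qed

lemma proportional_mat_families:
  fixes B B' :: "'i \<Rightarrow> nat \<Rightarrow> 'a :: field mat"
  assumes I: "finite I"
    and B: "\<And>i t. i \<in> I \<Longrightarrow> t < e i \<Longrightarrow> B i t \<in> carrier_mat (p i) (q i)"
    and B': "\<And>i t. i \<in> I \<Longrightarrow> t < e i \<Longrightarrow> B' i t \<in> carrier_mat (p i) (q i)"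
    and nz: "\<And>i. i \<in> I \<Longrightarrow> \<exists>t<e i. B i t \<noteq> 0\<^sub>m (p i) (q i)"
    and eq: "\<And>t r c. (\<And>i. i \<in> I \<Longrightarrow> t i < e i \<and> r i < p i \<and> c i < q i) \<Longrightarrow>
           (\<Prod>i\<in>I. B i (t i) $$ (r i, c i)) = (\<Prod>i\<in>I. B' i (t i) $$ (r i, c i))"
  shows "\<exists>\<beta>. (\<forall>i\<in>I. \<beta> i \<noteq> 0) \<and> prod \<beta> I = 1 \<and> (\<forall>i\<in>I. \<forall>t<e i. B i t = \<beta> i \<cdot>\<^sub>m B' i t)"
proof -
  define X where "X i = {(t, r, c). t < e i \<and> r < p i \<and> c < q i}" for i
  have "\<exists>\<beta>. (\<forall>i\<in>I. \<beta> i \<noteq> 0) \<and> prod \<beta> I = 1 \<and>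
      (\<forall>i\<in>I. \<forall>x\<in>X i. B i (fst x) $$ snd x = \<beta> i * B' i (fst x) $$ snd x)"
  proof (rule prod_eq_imp_proportional[OF I,
        where u="\<lambda>i x. B i (fst x) $$ snd x" and w="\<lambda>i x. B' i (fst x) $$ snd x"])
    fix f assume f: "\<forall>i\<in>I. f i \<in> X i"
    have "fst (f i) < e i \<and> fst (snd (f i)) < p i \<and> snd (snd (f i)) < q i" if "i \<in> I" for i
      using f that unfolding X_def by (cases "f i") auto
    then show "(\<Prod>i\<in>I. B i (fst (f i)) $$ snd (f i)) = (\<Prod>i\<in>I. B' i (fst (f i)) $$ snd (f i))"
      using eq[of "\<lambda>i. fst (f i)" "\<lambda>i. fst (snd (f i))" "\<lambda>i. snd (snd (f i))"] by simp
  next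
    show "\<forall>i\<in>I. \<exists>x\<in>X i. B i (fst x) $$ snd x \<noteq> 0"
    proof
      fix i assume i: "i \<in> I"
      obtain t where t: "t < e i" and B_nz: "B i t \<noteq> 0\<^sub>m (p i) (q i)"
        using nz[OF i] by blast
      have "\<exists>r<p i. \<exists>c<q i. B i t $$ (r, c) \<noteq> 0"
      proof (rule ccontr)
        assume "\<not> ?thesis"
        then have "B i t = 0\<^sub>m (p i) (q i)"
          using B[OF i t] by (intro eq_matI) auto
        then show False
          using B_nz by contradiction
      qed
      then obtain r c where "r < p i" "c < q i" "B i t $$ (r, c) \<noteq> 0"
        by blast
      then show "\<exists>x\<in>X i. B i (fst x) $$ snd x \<noteq> 0"
        using t by (intro bexI[of _ "(t, r, c)"]) (auto simp: X_def)
    qed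
  qed
  then obtain \<beta> where \<beta>: "\<forall>i\<in>I. \<beta> i \<noteq> 0" "prod \<beta> I = 1"
    and entries: "\<forall>i\<in>I. \<forall>x\<in>X i. B i (fst x) $$ snd x = \<beta> i * B' i (fst x) $$ snd x"
    by blast
  have "B i t = \<beta> i \<cdot>\<^sub>m B' i t" if "i \<in> I" "t < e i" for i t
    using B[OF that] B'[OF that] entries that by (intro eq_matI) (auto simp: X_def)
  then show ?thesis
    using \<beta> by blast
qed

theorem lemma1:
  fixes n :: nat and D :: "nat \<Rightarrow> nat" and d e :: "nat \<Rightarrow> nat"
    and A B B' :: "nat \<Rightarrow> nat \<Rightarrow> complex mat"
  assumes "n \<ge> 1"
    and "\<forall>k\<le>2*n. D k > 0"
    and "\<forall>i\<in>{1..n}. injective_mps (D (2*i-2)) (D (2*i-1)) (d i) (A i)"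
    and "\<forall>i\<in>{1..n}. \<forall>t<e i. B i t \<in> carrier_mat (D (2*i-1)) (D (2*i))"
    and "\<forall>i\<in>{1..n}. \<forall>t<e i. B' i t \<in> carrier_mat (D (2*i-1)) (D (2*i))"
    and "\<forall>i\<in>{1..n}. \<exists>t<e i. B i t \<noteq> 0\<^sub>m (D (2*i-1)) (D (2*i))"
    and "\<forall>s t. (\<forall>i\<in>{1..n}. s i < d i \<and> t i < e i) \<longrightarrow>
           chain_prod (D 0) n (\<lambda>i. A i (s i) * B i (t i)) =
           chain_prod (D 0) n (\<lambda>i. A i (s i) * B' i (t i))"
  shows "\<exists>\<beta> :: nat \<Rightarrow> complex. (\<forall>i\<in>{1..n}. \<beta> i \<noteq> 0) \<and> (\<Prod>i=1..n. \<beta> i) = 1 \<and>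
           (\<forall>i\<in>{1..n}. \<forall>t<e i. B i t = \<beta> i \<cdot>\<^sub>m B' i t)"
proof -
  define R where "R j = D (2*j)" for j
  define S where "S j = D (2*j-1)" for j
  have inj: "injective_mps (R (i-1)) (S i) (d i) (A i)" if "1 \<le> i" "i \<le> n" for i
    using assms(3) that by (simp add: R_def S_def diff_mult_distrib2)
  have B: "B i t \<in> carrier_mat (S i) (R i)" "B' i t \<in> carrier_mat (S i) (R i)"
    if "1 \<le> i" "i \<le> n" "t < e i" for i t
    using assms(4,5) that by (simp_all add: R_def S_def)
  have "(\<Prod>i=1..n. B i (t i) $$ (r i, c i)) = (\<Prod>i=1..n. B' i (t i) $$ (r i, c i))"
    if trc: "\<And>i. i \<in> {1..n} \<Longrightarrow> t i < e i \<and> r i < S i \<and> c i < R i" for t r c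
  proof (rule chain_prod_eq_imp_prod_entries_eq[where R=R and S=S])
    fix Y :: "nat \<Rightarrow> complex mat"
    assume Y: "\<And>j. 1 \<le> j \<Longrightarrow> j \<le> n \<Longrightarrow> Y j \<in> carrier_mat (R (j-1)) (S j)"
    have "chain_prod (R 0) n (\<lambda>i. A i (s i) * B i (t i)) = chain_prod (R 0) n (\<lambda>i. A i (s i) * B' i (t i))"
      if "\<forall>i\<in>{1..n}. s i < d i" for s
      using assms(7) that trc by (simp add: R_def)
    then show "chain_prod (R 0) n (\<lambda>j. Y j * B j (t j)) = chain_prod (R 0) n (\<lambda>j. Y j * B' j (t j))"
      using chain_prod_eq_all_slots[where d=d and A=A, OF inj _ _ _ Y] B trc by simp
  qed (use assms(1,2) B trc in \<open>auto simp: R_def\<close>)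
  then show ?thesis
    using proportional_mat_families[of "{1..n}" e B S R B'] assms(6) B by (simp add: R_def S_def)
qed

end
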